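(* Let $n\ge 3$, $u>0$, and let $S=[A_0,\dots,A_n]$ be an $n$-simplex with $\|A_i-A_0\|^2=v_i$ for $1\le i\le n$ and $\|A_i-A_j\|^2=u$ for $1\le i<j\le n$ (denoted $PK[n;u;v_1,\dots,v_n]$). Then its Cayley–Menger determinant is $$\mathcal{C}(S)=(-u)^{n-2}\Big[n(u^2+v_1^2+\cdots+v_n^2)-(u+v_1+\cdots+v_n)^2\Big],$$ and its inner Cayley–Menger determinant is $$\mathcal{D}(S)=(-u)^{n-1}\Big[(n-1)(v_1^2+\cdots+v_n^2)-(v_1+\cdots+v_n)^2\Big].$$
   Context: An $n$-simplex is the convex hull $[A_0,\dots,A_n]$ of $n+1$ affinely independent points in a Euclidean space. With $a_{i,j}=\|A_i-A_j\|^2$, the Cayley–Menger determinant $\mathcal{C}(S)$ is the $(n+2)\times(n+2)$ determinant with rows and columns indexed by $-1,0,\dots,n$, whose entries are $c_{i,i}=0$, $c_{-1,j}=c_{j,-1}=1$ for $j\ne -1$, and $c_{i,j}=a_{i,j}$ otherwise. The inner Cayley–Menger determinant $\mathcal{D}(S)$ is the $(n+1)\times(n+1)$ determinant $\det(a_{i,j})_{0\le i,j\le n}$ (i.e. $\mathcal{C}(S)$ with its first row and first column deleted). *)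

theory Defs
  imports "HOL-Analysis.Analysis" "Jordan_Normal_Form.Determinant"
begin

definition is_simplex :: "nat \<Rightarrow> (nat \<Rightarrow> 'a::euclidean_space) \<Rightarrow> bool" where
  "is_simplex n A \<longleftrightarrow> inj_on A {0..n} \<and> \<not> affine_dependent (A ` {0..n})"

text \<open>Cayley-Menger matrix; row/column 0 corresponds to index -1 of the paper,
  row/column k+1 corresponds to vertex A k.\<close>
definition cm_matrix :: "nat \<Rightarrow> (nat \<Rightarrow> 'a::euclidean_space) \<Rightarrow> real Matrix.mat" where
  "cm_matrix n A = Matrix.mat (n+2) (n+2)
     (\<lambda>(i,j). if i = j then 0 else if i = 0 \<or> j = 0 then 1
              else (dist (A (i-1)) (A (j-1)))^2)"

definition cayley_menger :: "nat \<Rightarrow> (nat \<Rightarrow> 'a::euclidean_space) \<Rightarrow> real" where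
  "cayley_menger n A = Determinant.det (cm_matrix n A)"

definition inner_cm_matrix :: "nat \<Rightarrow> (nat \<Rightarrow> 'a::euclidean_space) \<Rightarrow> real Matrix.mat" where
  "inner_cm_matrix n A = Matrix.mat (n+1) (n+1) (\<lambda>(i,j). (dist (A i) (A j))^2)"

definition inner_cayley_menger :: "nat \<Rightarrow> (nat \<Rightarrow> 'a::euclidean_space) \<Rightarrow> real" where
  "inner_cayley_menger n A = Determinant.det (inner_cm_matrix n A)"

end

theory Submission
  imports Defs
begin

text \<open>
  Both determinants are of the form \<open>det (- u I + L R)\<close> with \<open>L R\<close> of rank at most 4 (resp. 3):
  off the diagonal, the squared distances of a simplex \<open>PK[n;u;v\<^sub>1,\<dots>,v\<^sub>n]\<close> are \<open>u\<close> except in one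
  row and one column. Sylvester's identity \<open>det (c I\<^sub>N + L R) = c\<^sup>N\<^sup>-\<^sup>k det (c I\<^sub>k + R L)\<close>
  reduces them to explicit \<open>4 \<times> 4\<close> and \<open>3 \<times> 3\<close> determinants.
\<close>

lemma sylvester_det_identity:
  fixes U :: "'a::field mat"
  assumes U: "U \<in> carrier_mat N k" and V: "V \<in> carrier_mat k N" and "k \<le> N" and "c \<noteq> 0"
  shows "det (c \<cdot>\<^sub>m 1\<^sub>m N + U * V) = c^(N-k) * det (c \<cdot>\<^sub>m 1\<^sub>m k + V * U)"
proof -
  define X where "X = four_block_mat (c \<cdot>\<^sub>m 1\<^sub>m N) U (- V) (1\<^sub>m k)"
  define Y where "Y = four_block_mat (1\<^sub>m N) (0\<^sub>m N k) V (1\<^sub>m k)"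
  define Z where "Z = four_block_mat (1\<^sub>m N) (- U) (0\<^sub>m k N) (c \<cdot>\<^sub>m 1\<^sub>m k)"
  have X: "X \<in> carrier_mat (N+k) (N+k)" unfolding X_def using U V by auto
  have Y: "Y \<in> carrier_mat (N+k) (N+k)" unfolding Y_def using U V by auto
  have Z: "Z \<in> carrier_mat (N+k) (N+k)" unfolding Z_def using U V by auto
  have "X * Y = four_block_mat (c \<cdot>\<^sub>m 1\<^sub>m N + U * V) U (0\<^sub>m k N) (1\<^sub>m k)"
    unfolding X_def Y_def using U V by (subst mult_four_block_mat[of _ N N _ k _ k]) auto
  then have "det X * det Y = det (c \<cdot>\<^sub>m 1\<^sub>m N + U * V)"
    using U V by (simp add: det_mult[OF X Y, symmetric] det_four_block_mat_lower_left_zero[of _ N _ k])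
  moreover have "det Y = 1"
    unfolding Y_def using V by (simp add: det_four_block_mat_upper_right_zero[of _ N _ k])
  moreover have "c \<cdot>\<^sub>m 1\<^sub>m N * - U + U * (c \<cdot>\<^sub>m 1\<^sub>m k) = 0\<^sub>m N k"
    using U by (auto intro!: eq_matI simp: mult_smult_distrib mult_smult_assoc_mat)
  then have "X * Z = four_block_mat (c \<cdot>\<^sub>m 1\<^sub>m N) (0\<^sub>m N k) (- V) (c \<cdot>\<^sub>m 1\<^sub>m k + V * U)"
    unfolding X_def Z_def using U V by (subst mult_four_block_mat[of _ N N _ k _ k]) auto
  then have "det X * det Z = c ^ N * det (c \<cdot>\<^sub>m 1\<^sub>m k + V * U)"
    using U V by (simp add: det_mult[OF X Z, symmetric] det_four_block_mat_upper_right_zero[of _ N _ k])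
  moreover have "det Z = c ^ k"
    unfolding Z_def using U by (simp add: det_four_block_mat_lower_left_zero[of _ N _ k])
  moreover have "c ^ N = c ^ (N-k) * c ^ k"
    using assms(3) by (simp flip: power_add)
  ultimately have "det (c \<cdot>\<^sub>m 1\<^sub>m N + U * V) * c ^ k = c ^ (N-k) * det (c \<cdot>\<^sub>m 1\<^sub>m k + V * U) * c ^ k"
    by (simp add: algebra_simps)
  then show ?thesis
    using assms(4) by simp
qed

lemma det_mat_Suc:
  fixes f :: "nat \<times> nat \<Rightarrow> 'a::comm_ring_1"
  shows "det (Matrix.mat (Suc n) (Suc n) f) = (\<Sum>i<Suc n. (-1)^i * f (i,0) *
     det (Matrix.mat n n (\<lambda>(a,b). f (insert_index i a, Suc b))))"
proof -
  have minor: "mat_delete (Matrix.mat (Suc n) (Suc n) f) i 0 =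
      Matrix.mat n n (\<lambda>(a,b). f (insert_index i a, Suc b))" if "i < Suc n" for i
    using that by (auto simp: mat_delete_def insert_index_def intro!: eq_matI)
  have "det (Matrix.mat (Suc n) (Suc n) f) =
      (\<Sum>i<Suc n. Matrix.mat (Suc n) (Suc n) f $$ (i,0) * cofactor (Matrix.mat (Suc n) (Suc n) f) i 0)"
    by (rule laplace_expansion_column) auto
  then show ?thesis by (simp add: cofactor_def minor mult.assoc mult.left_commute)
qed

lemma scalar_prod_vec_Suc:
  "Matrix.vec (Suc n) f \<bullet> Matrix.vec (Suc n) g = f 0 * g 0 + (\<Sum>i<n. f (Suc i) * g (Suc i))"
  by (simp add: scalar_prod_def atLeast0LessThan sum.lessThan_Suc_shift del: sum.lessThan_Suc)

lemma scalar_prod_vec_Suc_Suc: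
  "Matrix.vec (Suc (Suc n)) f \<bullet> Matrix.vec (Suc (Suc n)) g =
     f 0 * g 0 + f 1 * g 1 + (\<Sum>i<n. f (Suc (Suc i)) * g (Suc (Suc i)))"
  by (simp add: scalar_prod_def atLeast0LessThan sum.lessThan_Suc_shift add.assoc del: sum.lessThan_Suc)

definition pk_sqdist :: "real \<Rightarrow> (nat \<Rightarrow> real) \<Rightarrow> nat \<Rightarrow> nat \<Rightarrow> real" where
  "pk_sqdist u v i j = (if i = j then 0 else if i = 0 then v j else if j = 0 then v i else u)"

lemma sqdist_eq_pk_sqdist:
  assumes "\<And>i. 1 \<le> i \<Longrightarrow> i \<le> n \<Longrightarrow> (dist (A i) (A 0))^2 = v i"
    and "\<And>i j. 1 \<le> i \<Longrightarrow> i < j \<Longrightarrow> j \<le> n \<Longrightarrow> (dist (A i) (A j))^2 = u"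
    and "i \<le> n" "j \<le> n"
  shows "(dist (A i) (A j))^2 = pk_sqdist u v i j"
  using assms(1)[of i] assms(1)[of j] assms(2)[of i j] assms(2)[of j i] assms(3,4)
  by (cases i j rule: linorder_cases) (auto simp: pk_sqdist_def dist_commute)

definition pk_inner_left :: "nat \<Rightarrow> (nat \<Rightarrow> real) \<Rightarrow> real mat" where
  "pk_inner_left n v = Matrix.mat (n+1) 3 (\<lambda>(i,k).
     (case i of 0 \<Rightarrow> [1, 0, 0] | Suc m \<Rightarrow> [0, v (Suc m), 1]) ! k)"

definition pk_inner_right :: "nat \<Rightarrow> real \<Rightarrow> (nat \<Rightarrow> real) \<Rightarrow> real mat" where
  "pk_inner_right n u v = Matrix.mat 3 (n+1) (\<lambda>(k,j).
     (case j of 0 \<Rightarrow> [u, 1, 0] | Suc m \<Rightarrow> [v (Suc m), 0, u]) ! k)"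

lemma inner_cm_matrix_pk:
  assumes "\<And>i j. i \<le> n \<Longrightarrow> j \<le> n \<Longrightarrow> (dist (A i) (A j))^2 = pk_sqdist u v i j"
  shows "inner_cm_matrix n A = (-u) \<cdot>\<^sub>m 1\<^sub>m (n+1) + pk_inner_left n v * pk_inner_right n u v"
  using assms
  by (intro eq_matI)
     (auto simp: inner_cm_matrix_def pk_inner_left_def pk_inner_right_def pk_sqdist_def
        scalar_prod_def numeral_eq_Suc split: nat.splits)

lemma det_pk_inner_capacitance:
  "det ((-u) \<cdot>\<^sub>m 1\<^sub>m 3 + pk_inner_right n u v * pk_inner_left n v) =
     -u * ((real n - 1) * (\<Sum>i=1..n. (v i)^2) - (\<Sum>i=1..n. v i)^2)"
proof -
  have "(-u) \<cdot>\<^sub>m 1\<^sub>m 3 + pk_inner_right n u v * pk_inner_left n v = Matrix.mat 3 3 (\<lambda>(k,l).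
      [[0, \<Sum>i=1..n. (v i)^2, \<Sum>i=1..n. v i],
       [1, -u, 0],
       [0, u * (\<Sum>i=1..n. v i), u * (real n - 1)]] ! k ! l)"
    by (rule eq_matI)
       (auto simp: scalar_prod_vec_Suc pk_inner_left_def pk_inner_right_def less_Suc_eq numeral_eq_Suc
          power2_eq_square sum_distrib_left sum.atLeast1_atMost_eq algebra_simps)
  then show ?thesis
    by (simp add: det_mat_Suc numeral_eq_Suc insert_index_def power2_eq_square algebra_simps)
qed

text \<open>As in \<open>cm_matrix\<close>, index \<open>0\<close> is the border and index \<open>i + 1\<close> the vertex \<open>A i\<close>.\<close>

definition pk_cm_left :: "nat \<Rightarrow> (nat \<Rightarrow> real) \<Rightarrow> real mat" where
  "pk_cm_left n v = Matrix.mat (n+2) 4 (\<lambda>(i,k).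
     (case i of 0 \<Rightarrow> [1, 0, 0, 0] | Suc 0 \<Rightarrow> [0, 1, 0, 0] | Suc (Suc m) \<Rightarrow> [0, 0, 1, v (Suc m)]) ! k)"

definition pk_cm_right :: "nat \<Rightarrow> real \<Rightarrow> (nat \<Rightarrow> real) \<Rightarrow> real mat" where
  "pk_cm_right n u v = Matrix.mat 4 (n+2) (\<lambda>(k,j).
     (case j of 0 \<Rightarrow> [u, 1, 1, 0] | Suc 0 \<Rightarrow> [1, u, 0, 1] | Suc (Suc m) \<Rightarrow> [1, v (Suc m), u, 0]) ! k)"

lemma cm_matrix_pk:
  assumes "\<And>i j. i \<le> n \<Longrightarrow> j \<le> n \<Longrightarrow> (dist (A i) (A j))^2 = pk_sqdist u v i j"
  shows "cm_matrix n A = (-u) \<cdot>\<^sub>m 1\<^sub>m (n+2) + pk_cm_left n v * pk_cm_right n u v"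
  using assms[of "_ - 1" "_ - 1"]
  by (intro eq_matI)
     (auto simp: cm_matrix_def pk_cm_left_def pk_cm_right_def pk_sqdist_def scalar_prod_def
        numeral_eq_Suc split: nat.splits)

lemma det_pk_cm_capacitance:
  "det ((-u) \<cdot>\<^sub>m 1\<^sub>m 4 + pk_cm_right n u v * pk_cm_left n v) =
     real n * (u^2 + (\<Sum>i=1..n. (v i)^2)) - (u + (\<Sum>i=1..n. v i))^2"
proof -
  have "(-u) \<cdot>\<^sub>m 1\<^sub>m 4 + pk_cm_right n u v * pk_cm_left n v = Matrix.mat 4 4 (\<lambda>(k,l).
      [[0, 1, real n, \<Sum>i=1..n. v i],
       [1, 0, \<Sum>i=1..n. v i, \<Sum>i=1..n. (v i)^2],
       [1, 0, u * (real n - 1), u * (\<Sum>i=1..n. v i)],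
       [0, 1, 0, -u]] ! k ! l)"
    by (rule eq_matI)
       (auto simp: scalar_prod_vec_Suc_Suc pk_cm_left_def pk_cm_right_def less_Suc_eq numeral_eq_Suc
          power2_eq_square sum_distrib_left sum.atLeast1_atMost_eq algebra_simps)
  then show ?thesis
    by (simp add: det_mat_Suc numeral_eq_Suc insert_index_def power2_eq_square algebra_simps)
qed

lemma cayley_menger_pk:
  assumes "n \<ge> 2" "u \<noteq> 0"
    and "\<And>i j. i \<le> n \<Longrightarrow> j \<le> n \<Longrightarrow> (dist (A i) (A j))^2 = pk_sqdist u v i j"
  shows "cayley_menger n A =
     (-u)^(n-2) * (real n * (u^2 + (\<Sum>i=1..n. (v i)^2)) - (u + (\<Sum>i=1..n. v i))^2)"
proof -
  have "cayley_menger n A = det ((-u) \<cdot>\<^sub>m 1\<^sub>m (n+2) + pk_cm_left n v * pk_cm_right n u v)"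
    using cm_matrix_pk[OF assms(3)] by (simp add: cayley_menger_def)
  also have "\<dots> = (-u)^(n+2-4) * det ((-u) \<cdot>\<^sub>m 1\<^sub>m 4 + pk_cm_right n u v * pk_cm_left n v)"
    using assms(1,2) by (intro sylvester_det_identity) (auto simp: pk_cm_left_def pk_cm_right_def)
  finally show ?thesis by (simp add: det_pk_cm_capacitance)
qed

lemma inner_cayley_menger_pk:
  assumes "n \<ge> 2" "u \<noteq> 0"
    and "\<And>i j. i \<le> n \<Longrightarrow> j \<le> n \<Longrightarrow> (dist (A i) (A j))^2 = pk_sqdist u v i j"
  shows "inner_cayley_menger n A =
     (-u)^(n-1) * ((real n - 1) * (\<Sum>i=1..n. (v i)^2) - (\<Sum>i=1..n. v i)^2)"
proof -
  have "inner_cayley_menger n A = det ((-u) \<cdot>\<^sub>m 1\<^sub>m (n+1) + pk_inner_left n v * pk_inner_right n u v)"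
    using inner_cm_matrix_pk[OF assms(3)] by (simp add: inner_cayley_menger_def)
  also have "\<dots> = (-u)^(n+1-3) * det ((-u) \<cdot>\<^sub>m 1\<^sub>m 3 + pk_inner_right n u v * pk_inner_left n v)"
    using assms(1,2) by (intro sylvester_det_identity) (auto simp: pk_inner_left_def pk_inner_right_def)
  also have "n - 1 = Suc (n+1-3)"
    using assms(1) by simp
  ultimately show ?thesis by (simp only: det_pk_inner_capacitance power_Suc2 mult.assoc)
qed

theorem theorem4p1:
  fixes A :: "nat \<Rightarrow> 'a::euclidean_space" and n :: nat and u :: real and v :: "nat \<Rightarrow> real"
  assumes "n \<ge> 3" and "u > 0"
    and "is_simplex n A"
    and "\<And>i. 1 \<le> i \<Longrightarrow> i \<le> n \<Longrightarrow> (dist (A i) (A 0))^2 = v i"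
    and "\<And>i j. 1 \<le> i \<Longrightarrow> i < j \<Longrightarrow> j \<le> n \<Longrightarrow> (dist (A i) (A j))^2 = u"
  shows "cayley_menger n A =
           (-u)^(n-2) * (real n * (u^2 + (\<Sum>i=1..n. (v i)^2)) - (u + (\<Sum>i=1..n. v i))^2)
         \<and> inner_cayley_menger n A =
           (-u)^(n-1) * ((real n - 1) * (\<Sum>i=1..n. (v i)^2) - (\<Sum>i=1..n. v i)^2)"
proof -
  have pk: "(dist (A i) (A j))^2 = pk_sqdist u v i j" if "i \<le> n" "j \<le> n" for i j
    using sqdist_eq_pk_sqdist[where A = A and u = u and v = v, OF assms(4,5) that] .
  have "n \<ge> 2" "u \<noteq> 0" using assms(1,2) by auto
  with pk show ?thesis by (simp add: cayley_menger_pk inner_cayley_menger_pk)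
qed

end
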